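(* Let $S=(d,N_1,\dots,N_L)$ be a neural network architecture, let $C>0$, let $\Omega\subset\mathbb{R}^d$ be Borel measurable and bounded, and let $\varrho(x)=\max\{0,x\}$ be the ReLU. Then the set $\mathcal{RNN}_\varrho^{\Omega,C}(S)=\{\mathrm{R}_\varrho^\Omega(\Phi):\Phi\in\mathcal{NN}(S),\ \|\Phi\|_{\mathrm{scaling}}\le C\}$ is closed in $L^p(\mu;\mathbb{R}^{N_L})$ for every $p\in[1,\infty]$ and every finite Borel measure $\mu$ on $\Omega$. If $\Omega$ is compact, then $\mathcal{RNN}_\varrho^{\Omega,C}(S)$ is also closed in $C(\Omega;\mathbb{R}^{N_L})$.
   Context: A neural network with architecture $S=(N_0,\dots,N_L)$ ($N_0=d$) is a family $\Phi=((A_\ell,b_\ell))_{\ell=1}^L$, $A_\ell\in\mathbb{R}^{N_\ell\times N_{\ell-1}}$, $b_\ell\in\mathbb{R}^{N_\ell}$; $\mathcal{NN}(S)$ is the set of these; $\|\Phi\|_{\mathrm{scaling}}=\max_\ell\|A_\ell\|_{\max}$, where $\|\cdot\|_{\max}$ is the maximal absolute entry (no bound is imposed on the biases $b_\ell$). $\mathrm{R}_\varrho^\Omega(\Phi):\Omega\to\mathbb{R}^{N_L}$, $x\mapsto x_L$, where $x_0=x$, $x_\ell=\varrho(A_\ell x_{\ell-1}+b_\ell)$ for $1\le\ell\le L-1$ (componentwise), $x_L=A_Lx_{L-1}+b_L$. The norms are $\|f\|_{L^p(\mu;\mathbb{R}^{N_L})}=\|\,|f|\,\|_{L^p(\mu)}$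 and $\|f\|_{\sup}=\sup_x|f(x)|$ with $|\cdot|$ the Euclidean norm. *)

theory Defs
  imports "HOL-Analysis.Analysis" "HOL-Probability.Essential_Supremum"
begin

definition enc :: "'n::finite \<Rightarrow> nat" where
  "enc = (SOME e. bij_betw e (UNIV::'n set) {..<CARD('n)})"

definition dec :: "nat \<Rightarrow> 'n::finite" where
  "dec = inv_into UNIV enc"

text \<open>A layer (A,b): A is the N_l x N_(l-1) matrix, b the bias vector,
  stored as functions on indices, zero outside the matrix/vector range.\<close>
type_synonym layer = "(nat \<Rightarrow> nat \<Rightarrow> real) \<times> (nat \<Rightarrow> real)"

definition is_NN :: "nat list \<Rightarrow> layer list \<Rightarrow> bool" where
  "is_NN S \<Phi> \<longleftrightarrow> length S = length \<Phi> + 1 \<and>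
     (\<forall>l < length \<Phi>.
        (\<forall>i j. (S ! (l+1) \<le> i \<or> S ! l \<le> j) \<longrightarrow> fst (\<Phi> ! l) i j = 0) \<and>
        (\<forall>i. S ! (l+1) \<le> i \<longrightarrow> snd (\<Phi> ! l) i = 0))"

definition scaling_norm :: "nat list \<Rightarrow> layer list \<Rightarrow> real" where
  "scaling_norm S \<Phi> = Max (\<Union>l<length \<Phi>.
      {\<bar>fst (\<Phi> ! l) i j\<bar> | i j. i < S ! (l+1) \<and> j < S ! l})"

definition aff :: "nat \<Rightarrow> layer \<Rightarrow> (nat \<Rightarrow> real) \<Rightarrow> nat \<Rightarrow> real" where
  "aff n l x = (\<lambda>i. (\<Sum>j<n. fst l i j * x j) + snd l i)"

fun eval_net :: "(real \<Rightarrow> real) \<Rightarrow> nat list \<Rightarrow> layer list \<Rightarrow> (nat \<Rightarrow> real) \<Rightarrow> (nat \<Rightarrow> real)" where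
  "eval_net \<rho> (n # ns) (l # l' # \<Phi>) x = eval_net \<rho> ns (l' # \<Phi>) (\<lambda>i. \<rho> (aff n l x i))"
| "eval_net \<rho> (n # ns) [l] x = aff n l x"
| "eval_net \<rho> _ _ x = x"

definition realization :: "(real \<Rightarrow> real) \<Rightarrow> nat list \<Rightarrow> layer list
    \<Rightarrow> real^'d::finite \<Rightarrow> real^'m::finite" where
  "realization \<rho> S \<Phi> x =
     (\<chi> k. eval_net \<rho> S \<Phi> (\<lambda>j. if j < CARD('d) then x $ dec j else 0) (enc k))"

definition relu :: "real \<Rightarrow> real" where
  "relu x = max 0 x"

text \<open>RNN^{Omega,C}_rho(S) for S = (d, N_1, ..., N_(L-1), N_L) where d = CARD('d),
  the hidden widths are hs = [N_1,...,N_(L-1)] and N_L = CARD('m).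
  Functions are considered on Omega (restriction is implicit in the norms below).\<close>
definition RNN :: "(real \<Rightarrow> real) \<Rightarrow> nat list \<Rightarrow> real \<Rightarrow> (real^'d::finite \<Rightarrow> real^'m::finite) set" where
  "RNN \<rho> hs C = {realization \<rho> (CARD('d) # hs @ [CARD('m)]) \<Phi> | \<Phi>.
       is_NN (CARD('d) # hs @ [CARD('m)]) \<Phi> \<and>
       scaling_norm (CARD('d) # hs @ [CARD('m)]) \<Phi> \<le> C}"

definition Lp_mem :: "'a measure \<Rightarrow> ennreal \<Rightarrow> ('a \<Rightarrow> 'b::euclidean_space) \<Rightarrow> bool" where
  "Lp_mem \<mu> p f \<longleftrightarrow> f \<in> borel_measurable \<mu> \<and>
     (if p = \<infinity> then esssup \<mu> (\<lambda>x. ereal (norm (f x))) < \<infinity>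
      else integrable \<mu> (\<lambda>x. norm (f x) powr enn2real p))"

definition Lp_norm :: "'a measure \<Rightarrow> ennreal \<Rightarrow> ('a \<Rightarrow> 'b::euclidean_space) \<Rightarrow> real" where
  "Lp_norm \<mu> p f =
     (if p = \<infinity> then real_of_ereal (esssup \<mu> (\<lambda>x. ereal (norm (f x))))
      else (\<integral>x. norm (f x) powr enn2real p \<partial>\<mu>) powr (1 / enn2real p))"

text \<open>F is a subset of L^p(mu) whose image in L^p (classes mod mu-a.e. equality) is closed.\<close>
definition closed_in_Lp :: "'a measure \<Rightarrow> ennreal \<Rightarrow> ('a \<Rightarrow> 'b::euclidean_space) set \<Rightarrow> bool" where
  "closed_in_Lp \<mu> p F \<longleftrightarrow> (\<forall>h\<in>F. Lp_mem \<mu> p h) \<and>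
     (\<forall>f g. Lp_mem \<mu> p f \<and> (\<forall>k. g k \<in> F) \<and>
        (\<lambda>k. Lp_norm \<mu> p (\<lambda>x. g k x - f x)) \<longlonglongrightarrow> 0
        \<longrightarrow> (\<exists>h\<in>F. AE x in \<mu>. f x = h x))"

definition closed_in_C :: "'a::topological_space set \<Rightarrow> ('a \<Rightarrow> 'b::euclidean_space) set \<Rightarrow> bool" where
  "closed_in_C \<Omega> F \<longleftrightarrow> (\<forall>h\<in>F. continuous_on \<Omega> h) \<and>
     (\<forall>f g. continuous_on \<Omega> f \<and> (\<forall>k. g k \<in> F) \<and> uniform_limit \<Omega> g f sequentially
        \<longrightarrow> (\<exists>h\<in>F. \<forall>x\<in>\<Omega>. f x = h x))"

end

theory Submission
  imports Defs
begin

(* With the scaling norm bounded by C the weights of a sequence of networks have a convergent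
   subsequence, but the biases need not stay bounded.  On a bounded domain this does no harm: a
   neuron whose bias tends to -\<infinity> is eventually constantly zero, one whose bias tends to
   +\<infinity> eventually acts affinely, so its large offset can be passed on to the biases of the
   next layer, and a neuron with convergent bias converges uniformly.  Layer by layer, a subsequence
   of the realizations is therefore of the form \<psi>_k + e_k with \<psi>_k converging uniformly on \<Omega>
   and constant vectors e_k, and every \<psi> + v is again a realization with weights bounded by C.
   Convergence at a single point of \<Omega> forces e_k to converge, hence convergence on all of \<Omega>
   to an element of the set.  A uniform limit provides such a point directly, an L^p limit via an
   almost everywhere convergent subsequence. *)

section \<open>Subsequences and uniform limits\<close>

lemma seq_compact_finite_subseq:
  fixes X :: "nat \<Rightarrow> 'i \<Rightarrow> 'a::topological_space"
  assumes "seq_compact S" "finite I" "\<And>k i. i \<in> I \<Longrightarrow> X k i \<in> S"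
  shows "\<exists>r l. strict_mono r \<and> (\<forall>i\<in>I. l i \<in> S \<and> (\<lambda>k. X (r k) i) \<longlonglongrightarrow> l i)"
  using assms(2,3)
proof (induction I rule: finite_induct)
  case empty
  show ?case using strict_mono_id by auto
next
  case (insert a I)
  then obtain r l where r: "strict_mono r" and l: "\<forall>i\<in>I. l i \<in> S \<and> (\<lambda>k. X (r k) i) \<longlonglongrightarrow> l i"
    by blast
  obtain la r' where la: "la \<in> S" and r': "strict_mono r'" and lim: "(\<lambda>k. X (r (r' k)) a) \<longlonglongrightarrow> la"
    using seq_compactE[OF assms(1), of "\<lambda>k. X (r k) a"] insert.prems by (auto simp: o_def)
  have "(\<lambda>k. X (r (r' k)) i) \<longlonglongrightarrow> l i" if "i \<in> I" for i
    using LIMSEQ_subseq_LIMSEQ[OF conjunct2[OF l[rule_format, OF that]] r'] by (simp add: o_def)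
  then show ?case
    using la lim l strict_mono_o[OF r r']
    by (intro exI[of _ "r \<circ> r'"] exI[of _ "l(a := la)"]) (auto simp: o_def)
qed

lemma seq_compact_ereal: "seq_compact (UNIV :: ereal set)"
  by (rule seq_compactI) (use compact_complete_linorder in blast)

lemma uniform_limit_subseq:
  assumes "uniform_limit X f g sequentially" "strict_mono r"
  shows "uniform_limit X (\<lambda>k. f (r k)) g sequentially"
  using filterlim_compose[OF assms(1) filterlim_subseq[OF assms(2)]] by (simp add: o_def)

lemma uniform_limit_const_seq:
  assumes "a \<longlonglongrightarrow> a0"
  shows "uniform_limit X (\<lambda>k x. a k) (\<lambda>x. a0) sequentially"
proof (rule uniform_limitI)
  fix e :: real assume "0 < e"
  with assms have "\<forall>\<^sub>F k in sequentially. dist (a k) a0 < e" by (rule tendstoD)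
  then show "\<forall>\<^sub>F k in sequentially. \<forall>x\<in>X. dist (a k) a0 < e" by eventually_elim auto
qed

lemma uniform_limit_sum:
  fixes f :: "'i \<Rightarrow> nat \<Rightarrow> 'a \<Rightarrow> 'b::real_normed_vector"
  assumes "finite I" "\<And>i. i \<in> I \<Longrightarrow> uniform_limit X (f i) (g i) F"
  shows "uniform_limit X (\<lambda>k x. \<Sum>i\<in>I. f i k x) (\<lambda>x. \<Sum>i\<in>I. g i x) F"
  using assms
  by (induction I rule: finite_induct) (auto intro: uniform_limit_add uniform_limit_const)

lemma uniformly_continuous_relu: "uniformly_continuous_on UNIV relu"
  unfolding uniformly_continuous_on_def
proof (intro allI impI)
  fix e :: real assume "0 < e"
  then show "\<exists>d>0. \<forall>x\<in>UNIV. \<forall>x'\<in>UNIV. dist x' x < d \<longrightarrow> dist (relu x') (relu x) < e"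
    by (intro exI[of _ e]) (auto simp: relu_def dist_real_def max_def)
qed

section \<open>Almost everywhere convergent subsequences\<close>

lemma Lp_mem_bounded:
  assumes "finite_measure \<mu>" and [measurable]: "h \<in> borel_measurable \<mu>"
    and B: "\<And>x. x \<in> space \<mu> \<Longrightarrow> norm (h x) \<le> B"
  shows "Lp_mem \<mu> p h"
proof (cases "p = \<infinity>")
  case True
  have "esssup \<mu> (\<lambda>x. ereal (norm (h x))) \<le> ereal B"
    using B by (intro esssup_I AE_I2) auto
  then show ?thesis
    using True by (auto simp: Lp_mem_def)
next
  case False
  have "integrable \<mu> (\<lambda>x. norm (h x) powr enn2real p)"
  proof (rule finite_measure.integrable_const_bound[OF assms(1),
        where B = "max 0 B powr enn2real p"])
    show "AE x in \<mu>. norm (norm (h x) powr enn2real p) \<le> max 0 B powr enn2real p"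
    proof (intro AE_I2)
      fix x assume "x \<in> space \<mu>"
      then have "norm (h x) \<le> max 0 B"
        using B by force
      then show "norm (norm (h x) powr enn2real p) \<le> max 0 B powr enn2real p"
        by (simp add: powr_mono2)
    qed
  qed measurable
  then show ?thesis
    using False by (simp add: Lp_mem_def)
qed

lemma Lp_mem_diff:
  assumes f: "Lp_mem \<mu> p f" and g: "Lp_mem \<mu> p g"
  shows "Lp_mem \<mu> p (\<lambda>x. g x - f x)"
proof -
  have [measurable]: "f \<in> borel_measurable \<mu>" "g \<in> borel_measurable \<mu>"
    using f g by (auto simp: Lp_mem_def)
  show ?thesis
  proof (cases "p = \<infinity>")
    case True
    define Mf where "Mf = esssup \<mu> (\<lambda>x. ereal (norm (f x)))"
    define Mg where "Mg = esssup \<mu> (\<lambda>x. ereal (norm (g x)))"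
    have "AE x in \<mu>. ereal (norm (g x - f x)) \<le> Mg + Mf"
      using esssup_AE[of "\<lambda>x. ereal (norm (f x))" \<mu>] esssup_AE[of "\<lambda>x. ereal (norm (g x))" \<mu>]
    proof eventually_elim
      case (elim x)
      have "ereal (norm (g x - f x)) \<le> ereal (norm (g x)) + ereal (norm (f x))"
        using norm_triangle_ineq4[of "g x" "f x"] by simp
      also have "\<dots> \<le> Mg + Mf"
        using elim by (intro add_mono) (auto simp: Mf_def Mg_def)
      finally show ?case .
    qed
    then have "esssup \<mu> (\<lambda>x. ereal (norm (g x - f x))) \<le> Mg + Mf"
      by (intro esssup_I) measurable
    also have "Mg + Mf < \<infinity>"
      using f g True by (cases Mf; cases Mg) (auto simp: Lp_mem_def Mf_def Mg_def)
    finally show ?thesis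
      using True by (simp add: Lp_mem_def)
  next
    case False
    define q where "q = enn2real p"
    have "0 \<le> q" by (simp add: q_def)
    have "integrable \<mu> (\<lambda>x. norm (g x - f x) powr q)"
    proof (rule Bochner_Integration.integrable_bound)
      show "integrable \<mu> (\<lambda>x. 2 powr q * (norm (g x) powr q + norm (f x) powr q))"
        using f g False by (auto simp: Lp_mem_def q_def)
      show "AE x in \<mu>. norm (norm (g x - f x) powr q) \<le>
          norm (2 powr q * (norm (g x) powr q + norm (f x) powr q))"
      proof (intro AE_I2)
        fix x
        have "norm (g x - f x) powr q \<le> (2 * max (norm (g x)) (norm (f x))) powr q"
          using norm_triangle_ineq4[of "g x" "f x"] \<open>0 \<le> q\<close> by (intro powr_mono2) auto
        also have "\<dots> = 2 powr q * max (norm (g x)) (norm (f x)) powr q"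
          by (simp add: powr_mult)
        also have "\<dots> \<le> 2 powr q * (norm (g x) powr q + norm (f x) powr q)"
          by (intro mult_left_mono) (auto simp: max_def)
        finally show "norm (norm (g x - f x) powr q) \<le>
            norm (2 powr q * (norm (g x) powr q + norm (f x) powr q))"
          by simp
      qed
    qed measurable
    then show ?thesis
      using False by (simp add: Lp_mem_def q_def)
  qed
qed

lemma AE_norm_le_Linf_norm:
  assumes "Lp_mem \<mu> \<infinity> h"
  shows "AE x in \<mu>. norm (h x) \<le> Lp_norm \<mu> \<infinity> h"
  using esssup_AE[of "\<lambda>x. ereal (norm (h x))" \<mu>]
proof eventually_elim
  case (elim x)
  moreover have "esssup \<mu> (\<lambda>x. ereal (norm (h x))) < \<infinity>"
    using assms by (simp add: Lp_mem_def)
  ultimately show ?case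
    by (cases "esssup \<mu> (\<lambda>x. ereal (norm (h x)))") (auto simp: Lp_norm_def)
qed

lemma Linf_norm_tendsto_zero_AE:
  assumes f: "Lp_mem \<mu> \<infinity> f" and g: "\<And>k. Lp_mem \<mu> \<infinity> (g k)"
    and lim: "(\<lambda>k. Lp_norm \<mu> \<infinity> (\<lambda>x. g k x - f x)) \<longlonglongrightarrow> 0"
  shows "AE x in \<mu>. (\<lambda>k. g k x) \<longlonglongrightarrow> f x"
proof -
  have "AE x in \<mu>. \<forall>k. norm (g k x - f x) \<le> Lp_norm \<mu> \<infinity> (\<lambda>x. g k x - f x)"
    using AE_norm_le_Linf_norm[OF Lp_mem_diff[OF f g]] by (simp add: AE_all_countable)
  then show ?thesis
  proof eventually_elim
    case (elim x)
    have "(\<lambda>k. g k x - f x) \<longlonglongrightarrow> 0"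
      by (rule Lim_null_comparison[OF always_eventually lim]) (use elim in auto)
    then show ?case
      by (simp add: LIM_zero_iff)
  qed
qed

lemma Lp_norm_tendsto_zero_AE_subseq_finite:
  fixes f :: "'a \<Rightarrow> 'b::euclidean_space"
  assumes p: "0 < p" "p \<noteq> \<infinity>" and f: "Lp_mem \<mu> p f" and g: "\<And>k. Lp_mem \<mu> p (g k)"
    and lim: "(\<lambda>k. Lp_norm \<mu> p (\<lambda>x. g k x - f x)) \<longlonglongrightarrow> 0"
  obtains s where "strict_mono s" "AE x in \<mu>. (\<lambda>k. g (s k) x) \<longlonglongrightarrow> f x"
proof -
  define q where "q = enn2real p"
  have "0 < q"
    using p by (simp add: q_def enn2real_positive_iff top.not_eq_extremum)
  define H where "H k x = norm (g k x - f x) powr q" for k x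
  have H_int: "integrable \<mu> (H k)" for k
    using Lp_mem_diff[OF f g] p by (simp add: Lp_mem_def H_def[abs_def] q_def)
  have "Lp_norm \<mu> p (\<lambda>x. g k x - f x) powr q = (\<integral>x. norm (H k x) \<partial>\<mu>)" for k
    using p \<open>0 < q\<close> by (simp add: Lp_norm_def H_def q_def powr_powr integral_nonneg_AE)
  moreover have "(\<lambda>k. Lp_norm \<mu> p (\<lambda>x. g k x - f x) powr q) \<longlonglongrightarrow> 0"
    using \<open>0 < q\<close> p by (intro tendsto_zero_powrI[OF lim]) (auto simp: Lp_norm_def)
  ultimately have "(\<lambda>k. \<integral>x. norm (H k x) \<partial>\<mu>) \<longlonglongrightarrow> 0"
    by simp
  then obtain s where s: "strict_mono s" and AE: "AE x in \<mu>. (\<lambda>k. H (s k) x) \<longlonglongrightarrow> 0"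
    using tendsto_L1_AE_subseq[where u = H, OF H_int] by blast
  from AE have "AE x in \<mu>. (\<lambda>k. g (s k) x) \<longlonglongrightarrow> f x"
  proof eventually_elim
    case (elim x)
    have "(\<lambda>k. H (s k) x powr (1 / q)) \<longlonglongrightarrow> 0"
      using \<open>0 < q\<close> by (intro tendsto_zero_powrI[OF elim tendsto_const]) (auto simp: H_def)
    moreover have "H (s k) x powr (1 / q) = norm (g (s k) x - f x)" for k
      using \<open>0 < q\<close> by (simp add: H_def powr_powr)
    ultimately have "(\<lambda>k. norm (g (s k) x - f x)) \<longlonglongrightarrow> 0"
      by simp
    then show ?case
      by (simp add: tendsto_norm_zero_iff LIM_zero_iff)
  qed
  with s that show ?thesis by blast
qed

lemma Lp_norm_tendsto_zero_AE_subseq: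
  fixes f :: "'a \<Rightarrow> 'b::euclidean_space"
  assumes "0 < p" "Lp_mem \<mu> p f" "\<And>k. Lp_mem \<mu> p (g k)"
    and "(\<lambda>k. Lp_norm \<mu> p (\<lambda>x. g k x - f x)) \<longlonglongrightarrow> 0"
  obtains s where "strict_mono s" "AE x in \<mu>. (\<lambda>k. g (s k) x) \<longlonglongrightarrow> f x"
proof (cases "p = \<infinity>")
  case True
  then show ?thesis
    using Linf_norm_tendsto_zero_AE[of \<mu> f g] assms that[of id] by (simp add: strict_mono_id)
next
  case False
  then show ?thesis
    using Lp_norm_tendsto_zero_AE_subseq_finite[of p \<mu> f g] assms that by blast
qed

lemma AE_imp_bex_space:
  assumes "emeasure M (space M) \<noteq> 0" "AE x in M. P x"
  shows "\<exists>x\<in>space M. P x"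
proof (rule ccontr)
  assume "\<not> (\<exists>x\<in>space M. P x)"
  then have "AE x in M. False"
    using assms(2) by (auto elim!: AE_mp intro!: AE_I2)
  then show False
    using assms(1) by (simp add: ae_filter_eq_bot_iff)
qed

section \<open>Limits of single layers\<close>

definition bounded_uniform_limit ::
    "'a set \<Rightarrow> nat \<Rightarrow> (nat \<Rightarrow> 'a \<Rightarrow> nat \<Rightarrow> real) \<Rightarrow> ('a \<Rightarrow> nat \<Rightarrow> real) \<Rightarrow> bool" where
  "bounded_uniform_limit \<Omega> n fs f \<longleftrightarrow>
     (\<forall>j<n. uniform_limit \<Omega> (\<lambda>k x. fs k x j) (\<lambda>x. f x j) sequentially \<and> bounded ((\<lambda>x. f x j) ` \<Omega>))"

lemma bounded_uniform_limit_subseq: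
  "bounded_uniform_limit \<Omega> n fs f \<Longrightarrow> strict_mono r \<Longrightarrow> bounded_uniform_limit \<Omega> n (\<lambda>k. fs (r k)) f"
  unfolding bounded_uniform_limit_def
  using uniform_limit_subseq[where f = "\<lambda>k x. fs k x j" and g = "\<lambda>x. f x j" and r = r for j] by simp

lemma bounded_sum_comp:
  fixes f :: "'i \<Rightarrow> 'a \<Rightarrow> 'b::real_normed_vector"
  assumes "finite I" "\<And>i. i \<in> I \<Longrightarrow> bounded (f i ` S)"
  shows "bounded ((\<lambda>x. \<Sum>i\<in>I. f i x) ` S)"
  using assms
  by (induction I rule: finite_induct) (auto simp: image_constant_conv intro: bounded_plus_comp)

lemma bounded_uniform_limit_linear_subseq:
  fixes W :: "nat \<Rightarrow> nat \<Rightarrow> nat \<Rightarrow> real"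
  assumes W: "\<And>k i j. \<bar>W k i j\<bar> \<le> C" and lim: "bounded_uniform_limit \<Omega> n fs f"
  obtains r W' where "strict_mono r" "\<And>i j. \<bar>W' i j\<bar> \<le> C" "\<And>i j. m \<le> i \<or> n \<le> j \<Longrightarrow> W' i j = 0"
    "bounded_uniform_limit \<Omega> m (\<lambda>k x i. \<Sum>j<n. W (r k) i j * fs (r k) x j)
       (\<lambda>x i. \<Sum>j<n. W' i j * f x j)"
proof -
  have "W k (fst p) (snd p) \<in> {-C..C}" for k p
    using W[of k "fst p" "snd p"] by (auto simp: abs_le_iff)
  then obtain r L where r: "strict_mono r"
    and L: "\<forall>p\<in>{..<m} \<times> {..<n}. L p \<in> {-C..C} \<and> (\<lambda>k. W (r k) (fst p) (snd p)) \<longlonglongrightarrow> L p"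
    using seq_compact_finite_subseq[OF compact_imp_seq_compact[OF compact_Icc], of "{..<m} \<times> {..<n}"
        "\<lambda>k p. W k (fst p) (snd p)"]
    by blast
  define W' where "W' i j = (if i < m \<and> j < n then L (i, j) else 0)" for i j
  have "0 \<le> C" using W[of 0 0 0] by linarith
  then have W'_bound: "\<bar>W' i j\<bar> \<le> C" for i j
    using L[rule_format, of "(i, j)"] by (auto simp: W'_def abs_le_iff)
  have W'_lim: "(\<lambda>k. W (r k) i j) \<longlonglongrightarrow> W' i j" if "i < m" "j < n" for i j
    using L that by (auto simp: W'_def)
  have "bounded_uniform_limit \<Omega> m (\<lambda>k x i. \<Sum>j<n. W (r k) i j * fs (r k) x j)
      (\<lambda>x i. \<Sum>j<n. W' i j * f x j)"
    unfolding bounded_uniform_limit_def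
  proof (intro allI impI conjI)
    fix i assume "i < m"
    have f: "uniform_limit \<Omega> (\<lambda>k x. fs (r k) x j) (\<lambda>x. f x j) sequentially"
      "bounded ((\<lambda>x. f x j) ` \<Omega>)"
      if "j < n" for j
      using bounded_uniform_limit_subseq[OF lim r] that by (auto simp: bounded_uniform_limit_def)
    show "uniform_limit \<Omega> (\<lambda>k x. \<Sum>j<n. W (r k) i j * fs (r k) x j)
        (\<lambda>x. \<Sum>j<n. W' i j * f x j) sequentially"
      using f W'_lim[OF \<open>i < m\<close>]
      by (intro uniform_limit_sum uniform_lim_mult uniform_limit_const_seq)
        (auto simp: image_constant_conv)
    show "bounded ((\<lambda>x. \<Sum>j<n. W' i j * f x j) ` \<Omega>)"
      using f
      by (intro bounded_sum_comp) (auto simp: bounded_scaleR_comp[where 'b = real, simplified])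
  qed
  moreover have "m \<le> i \<or> n \<le> j \<Longrightarrow> W' i j = 0" for i j
    by (auto simp: W'_def)
  ultimately show ?thesis
    using that r W'_bound by blast
qed

definition relu_limit :: "ereal \<Rightarrow> real \<Rightarrow> real" where
  "relu_limit E y = (if E = \<infinity> then y else if E = -\<infinity> then 0 else relu (y + real_of_ereal E))"

definition relu_limit_bias :: "real \<Rightarrow> ereal \<Rightarrow> real" where
  "relu_limit_bias B E = (if E = \<infinity> then B else if E = -\<infinity> then -B else real_of_ereal E)"

lemma relu_add_relu_limit_bias:
  "\<bar>y\<bar> \<le> B \<Longrightarrow> relu (y + relu_limit_bias B E) = relu_limit E y + (if E = \<infinity> then B else 0)"
  by (auto simp: relu_limit_def relu_limit_bias_def relu_def)

lemma bounded_relu_limit_comp: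
  assumes "bounded (f ` S)"
  shows "bounded ((\<lambda>x. relu_limit E (f x)) ` S)"
proof -
  obtain B where B: "\<And>x. x \<in> S \<Longrightarrow> \<bar>f x\<bar> \<le> B"
    using assms by (auto simp: bounded_iff)
  have "\<bar>relu_limit E (f x)\<bar> \<le> B + \<bar>real_of_ereal E\<bar>" if "x \<in> S" for x
    using B[OF that] by (cases E) (auto simp: relu_limit_def relu_def max_def)
  then show ?thesis
    by (auto simp: bounded_iff)
qed

lemma uniform_limit_relu_shift:
  fixes fs :: "nat \<Rightarrow> 'a \<Rightarrow> real"
  assumes lim: "uniform_limit \<Omega> fs f sequentially" and bdd: "bounded (f ` \<Omega>)"
    and e: "(\<lambda>k. ereal (e k)) \<longlonglongrightarrow> E"
  shows "uniform_limit \<Omega> (\<lambda>k x. relu (fs k x + e k) - (if E = \<infinity> then e k else 0))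
           (\<lambda>x. relu_limit E (f x)) sequentially"
proof -
  obtain B where B: "\<And>x. x \<in> \<Omega> \<Longrightarrow> \<bar>f x\<bar> \<le> B"
    using bdd by (auto simp: bounded_iff)
  have close: "\<forall>\<^sub>F k in sequentially. \<forall>x\<in>\<Omega>. \<bar>fs k x - f x\<bar> < 1"
    using uniform_limitD[OF lim, of 1] by (simp add: dist_real_def)
  consider (pinf) "E = \<infinity>" | (minf) "E = -\<infinity>" | (fin) a where "E = ereal a"
    by (cases E) auto
  then show ?thesis
  proof cases
    case pinf
    have "\<forall>\<^sub>F k in sequentially. ereal (B + 1) < e k"
      using e unfolding pinf tendsto_PInfty by blast
    with close have "\<forall>\<^sub>F k in sequentially. \<forall>x\<in>\<Omega>. relu (fs k x + e k) - e k = fs k x"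
      by eventually_elim (use B in \<open>force simp: relu_def\<close>)
    with lim show ?thesis
      unfolding pinf by (subst uniform_limit_cong) (auto simp: relu_limit_def)
  next
    case minf
    have "\<forall>\<^sub>F k in sequentially. e k < ereal (- B - 1)"
      using e unfolding minf tendsto_MInfty by blast
    with close have "\<forall>\<^sub>F k in sequentially. \<forall>x\<in>\<Omega>. relu (fs k x + e k) = 0"
      by eventually_elim (use B in \<open>force simp: relu_def\<close>)
    then show ?thesis
      unfolding minf by (subst uniform_limit_cong) (auto simp: relu_limit_def uniform_limit_const)
  next
    case (fin a)
    have "uniform_limit \<Omega> (\<lambda>k x. fs k x + e k) (\<lambda>x. f x + a) sequentially"
      using e unfolding fin by (intro uniform_limit_add lim uniform_limit_const_seq) simp
    from uniform_limit_compose[OF this uniformly_continuous_relu] show ?thesis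
      unfolding fin by (simp add: relu_limit_def o_def)
  qed
qed

lemma aff_add:
  "aff n (W, b) (\<lambda>j. u j + v j) i = (\<Sum>j<n. W i j * u j) + aff n (W, b) v i"
  by (simp add: aff_def algebra_simps sum.distrib)

lemma relu_limit_realizable:
  fixes W' :: "nat \<Rightarrow> nat \<Rightarrow> real"
  assumes "\<And>i. i < m \<Longrightarrow> bounded ((\<lambda>x. \<Sum>j<n. W' i j * f x j) ` \<Omega>)"
  shows "\<exists>b' \<gamma>'. (\<forall>i. m \<le> i \<longrightarrow> b' i = 0) \<and> (\<forall>x\<in>\<Omega>. \<forall>i<m.
     relu (aff n (W', b') (\<lambda>j. f x j + \<gamma> j) i) = relu_limit (E i) (\<Sum>j<n. W' i j * f x j) + \<gamma>' i)"
proof -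
  have "\<forall>i. \<exists>B. i < m \<longrightarrow> (\<forall>x\<in>\<Omega>. \<bar>\<Sum>j<n. W' i j * f x j\<bar> \<le> B)"
    using assms by (auto simp: bounded_iff)
  then obtain B where B: "\<And>x i. x \<in> \<Omega> \<Longrightarrow> i < m \<Longrightarrow> \<bar>\<Sum>j<n. W' i j * f x j\<bar> \<le> B i"
    by metis
  define b' where "b' i = (if i < m then relu_limit_bias (B i) (E i) - (\<Sum>j<n. W' i j * \<gamma> j) else 0)"
    for i
  have "aff n (W', b') (\<lambda>j. f x j + \<gamma> j) i = (\<Sum>j<n. W' i j * f x j) + relu_limit_bias (B i) (E i)"
    if "i < m" for x i
    using that by (simp add: aff_def b'_def distrib_left sum.distrib)
  then show ?thesis
    using relu_add_relu_limit_bias[OF B]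
    by (intro exI[of _ b'] exI[of _ "\<lambda>i. if E i = \<infinity> then B i else 0"]) (simp add: b'_def)
qed

lemma hidden_layer_subseq_limit:
  fixes W :: "nat \<Rightarrow> nat \<Rightarrow> nat \<Rightarrow> real" and b c :: "nat \<Rightarrow> nat \<Rightarrow> real"
  assumes W: "\<And>k i j. \<bar>W k i j\<bar> \<le> C" and lim: "bounded_uniform_limit \<Omega> n fs f"
  obtains r W' gs c' g where "strict_mono r"
    "\<And>i j. \<bar>W' i j\<bar> \<le> C" "\<And>i j. m \<le> i \<or> n \<le> j \<Longrightarrow> W' i j = 0"
    "\<And>k x i. relu (aff n (W (r k), b (r k)) (\<lambda>j. fs (r k) x j + c (r k) j) i) = gs k x i + c' k i"
    "bounded_uniform_limit \<Omega> m gs g"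
    "\<And>\<gamma>. \<exists>b' \<gamma>'. (\<forall>i. m \<le> i \<longrightarrow> b' i = 0) \<and>
        (\<forall>x\<in>\<Omega>. \<forall>i<m. relu (aff n (W', b') (\<lambda>j. f x j + \<gamma> j) i) = g x i + \<gamma>' i)"
proof -
  obtain r1 W' where r1: "strict_mono r1"
    and W': "\<And>i j. \<bar>W' i j\<bar> \<le> C" "\<And>i j. m \<le> i \<or> n \<le> j \<Longrightarrow> W' i j = 0"
    and lin: "bounded_uniform_limit \<Omega> m (\<lambda>k x i. \<Sum>j<n. W (r1 k) i j * fs (r1 k) x j)
                (\<lambda>x i. \<Sum>j<n. W' i j * f x j)"
    using bounded_uniform_limit_linear_subseq[where W = W and m = m, OF W lim] by blast
  define \<psi> where "\<psi> x i = (\<Sum>j<n. W' i j * f x j)" for x i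
  define e where "e k i = aff n (W (r1 k), b (r1 k)) (c (r1 k)) i" for k i
  obtain r2 E where r2: "strict_mono r2" and E: "\<forall>i\<in>{..<m}. (\<lambda>k. ereal (e (r2 k) i)) \<longlonglongrightarrow> E i"
    using seq_compact_finite_subseq[OF seq_compact_ereal, of "{..<m}" "\<lambda>k i. ereal (e k i)"]
    by blast
  define r where "r = r1 \<circ> r2"
  define c' where "c' k i = (if E i = \<infinity> then e (r2 k) i else 0)" for k i
  define gs where
    "gs k x i = relu (aff n (W (r k), b (r k)) (\<lambda>j. fs (r k) x j + c (r k) j) i) - c' k i"
    for k x i
  define g where "g x i = relu_limit (E i) (\<psi> x i)" for x i
  have \<psi>: "uniform_limit \<Omega> (\<lambda>k x. \<Sum>j<n. W (r k) i j * fs (r k) x j) (\<lambda>x. \<psi> x i) sequentially"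
    "bounded ((\<lambda>x. \<psi> x i) ` \<Omega>)" if "i < m" for i
    using bounded_uniform_limit_subseq[OF lin r2] that
    by (auto simp: bounded_uniform_limit_def r_def \<psi>_def)
  have "bounded_uniform_limit \<Omega> m gs g"
    unfolding bounded_uniform_limit_def
  proof (intro allI impI conjI)
    fix i assume "i < m"
    show "uniform_limit \<Omega> (\<lambda>k x. gs k x i) (\<lambda>x. g x i) sequentially"
      using uniform_limit_relu_shift[OF \<psi>[OF \<open>i < m\<close>] E[rule_format, of i]] \<open>i < m\<close>
      by (simp add: gs_def g_def c'_def e_def aff_add r_def)
    show "bounded ((\<lambda>x. g x i) ` \<Omega>)"
      unfolding g_def using \<psi>(2)[OF \<open>i < m\<close>] by (rule bounded_relu_limit_comp)
  qed
  moreover have "\<exists>b' \<gamma>'. (\<forall>i. m \<le> i \<longrightarrow> b' i = 0) \<and>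
      (\<forall>x\<in>\<Omega>. \<forall>i<m. relu (aff n (W', b') (\<lambda>j. f x j + \<gamma> j) i) = g x i + \<gamma>' i)" for \<gamma>
    using relu_limit_realizable[OF \<psi>(2)[unfolded \<psi>_def], where \<gamma> = \<gamma> and E = E]
    by (simp add: g_def \<psi>_def)
  ultimately show ?thesis
    using that[of r W' gs c' g] strict_mono_o[OF r1 r2] W' by (simp add: gs_def r_def)
qed

lemma output_layer_subseq_limit:
  fixes W :: "nat \<Rightarrow> nat \<Rightarrow> nat \<Rightarrow> real" and b c :: "nat \<Rightarrow> nat \<Rightarrow> real"
  assumes W: "\<And>k i j. \<bar>W k i j\<bar> \<le> C" and lim: "bounded_uniform_limit \<Omega> n fs f"
  obtains r W' gs e g where "strict_mono r"
    "\<And>i j. \<bar>W' i j\<bar> \<le> C" "\<And>i j. m \<le> i \<or> n \<le> j \<Longrightarrow> W' i j = 0"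
    "\<And>k x i. aff n (W (r k), b (r k)) (\<lambda>j. fs (r k) x j + c (r k) j) i = gs k x i + e k i"
    "bounded_uniform_limit \<Omega> m gs g"
    "\<And>\<gamma> \<epsilon>. \<exists>b'. (\<forall>i. m \<le> i \<longrightarrow> b' i = 0) \<and>
        (\<forall>x\<in>\<Omega>. \<forall>i<m. aff n (W', b') (\<lambda>j. f x j + \<gamma> j) i = g x i + \<epsilon> i)"
proof -
  obtain r W' where r: "strict_mono r"
    and W': "\<And>i j. \<bar>W' i j\<bar> \<le> C" "\<And>i j. m \<le> i \<or> n \<le> j \<Longrightarrow> W' i j = 0"
    and lin: "bounded_uniform_limit \<Omega> m (\<lambda>k x i. \<Sum>j<n. W (r k) i j * fs (r k) x j)
                (\<lambda>x i. \<Sum>j<n. W' i j * f x j)"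
    using bounded_uniform_limit_linear_subseq[where W = W and m = m, OF W lim] by blast
  have "\<exists>b'. (\<forall>i. m \<le> i \<longrightarrow> b' i = 0) \<and>
      (\<forall>x\<in>\<Omega>. \<forall>i<m. aff n (W', b') (\<lambda>j. f x j + \<gamma> j) i = (\<Sum>j<n. W' i j * f x j) + \<epsilon> i)"
    for \<gamma> \<epsilon>
    by (rule exI[of _ "\<lambda>i. if i < m then \<epsilon> i - (\<Sum>j<n. W' i j * \<gamma> j) else 0"])
      (simp add: aff_def distrib_left sum.distrib)
  with that[OF r W' _ lin] show ?thesis
    by (simp add: aff_add)
qed

section \<open>Limits of networks\<close>

definition bounded_NN :: "real \<Rightarrow> nat list \<Rightarrow> layer list \<Rightarrow> bool" where
  "bounded_NN C S \<Phi> \<longleftrightarrow> is_NN S \<Phi> \<and> (\<forall>l\<in>set \<Phi>. \<forall>i j. \<bar>fst l i j\<bar> \<le> C)"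

lemma bounded_NN_length: "bounded_NN C S \<Phi> \<Longrightarrow> length S = length \<Phi> + 1"
  by (simp add: bounded_NN_def is_NN_def)

lemma is_NN_Cons_Cons:
  "is_NN (n # m # ms) (l # \<Phi>) \<longleftrightarrow>
     (\<forall>i j. m \<le> i \<or> n \<le> j \<longrightarrow> fst l i j = 0) \<and> (\<forall>i. m \<le> i \<longrightarrow> snd l i = 0) \<and> is_NN (m # ms) \<Phi>"
  unfolding is_NN_def by (simp add: All_less_Suc2) blast

lemma bounded_NN_Cons_Cons:
  "bounded_NN C (n # m # ms) (l # \<Phi>) \<longleftrightarrow>
     (\<forall>i j. \<bar>fst l i j\<bar> \<le> C \<and> (m \<le> i \<or> n \<le> j \<longrightarrow> fst l i j = 0)) \<and> (\<forall>i. m \<le> i \<longrightarrow> snd l i = 0) \<and>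
     bounded_NN C (m # ms) \<Phi>"
  by (auto simp: bounded_NN_def is_NN_Cons_Cons)

lemma bounded_NN_Nil: "bounded_NN C [m] []"
  by (simp add: bounded_NN_def is_NN_def)

lemma bounded_NN_hd_tl:
  assumes "bounded_NN C (n # m # ms) \<Phi>"
  shows "\<Phi> = (fst (hd \<Phi>), snd (hd \<Phi>)) # tl \<Phi>" "\<bar>fst (hd \<Phi>) i j\<bar> \<le> C" "bounded_NN C (m # ms) (tl \<Phi>)"
proof -
  obtain l \<Psi> where "\<Phi> = l # \<Psi>"
    using bounded_NN_length[OF assms] by (cases \<Phi>) auto
  then show "\<Phi> = (fst (hd \<Phi>), snd (hd \<Phi>)) # tl \<Phi>" "\<bar>fst (hd \<Phi>) i j\<bar> \<le> C"
    "bounded_NN C (m # ms) (tl \<Phi>)"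
    using assms by (simp_all add: bounded_NN_Cons_Cons)
qed

lemma eval_net_Cons_Cons:
  "\<Phi> \<noteq> [] \<Longrightarrow> eval_net \<rho> (n # ns) (l # \<Phi>) x = eval_net \<rho> ns \<Phi> (\<lambda>i. \<rho> (aff n l x i))"
  by (cases \<Phi>) auto

lemma eval_net_cong:
  assumes "\<Phi> \<noteq> []" "\<And>j. j < n \<Longrightarrow> x j = y j"
  shows "eval_net \<rho> (n # ns) \<Phi> x = eval_net \<rho> (n # ns) \<Phi> y"
proof -
  have "aff n l x = aff n l y" for l
    using assms(2) by (auto simp: aff_def)
  with assms(1) show ?thesis
    by (cases \<Phi> rule: remdups_adj.cases) auto
qed

lemma eval_net_Cons_Cons_cong:
  assumes "\<Psi> \<noteq> []" "\<And>i. i < m \<Longrightarrow> \<rho> (aff n l x i) = y i"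
  shows "eval_net \<rho> (n # m # ms) (l # \<Psi>) x = eval_net \<rho> (m # ms) \<Psi> y"
proof -
  have "eval_net \<rho> (n # m # ms) (l # \<Psi>) x = eval_net \<rho> (m # ms) \<Psi> (\<lambda>i. \<rho> (aff n l x i))"
    by (rule eval_net_Cons_Cons[OF assms(1)])
  also have "\<dots> = eval_net \<rho> (m # ms) \<Psi> y"
    by (rule eval_net_cong[OF assms(1)]) (use assms(2) in simp)
  finally show ?thesis .
qed

text \<open>Only \<open>gs\<close> has to converge; the offsets \<open>c\<close> of the inputs and \<open>e\<close> of the outputs may
  diverge.  This is what lets a neuron whose bias tends to \<open>+\<infinity>\<close> pass its offset on to the next
  layer.\<close>

definition realizable_subseq_limit ::
    "'a set \<Rightarrow> real \<Rightarrow> nat list \<Rightarrow> (nat \<Rightarrow> layer list) \<Rightarrow> (nat \<Rightarrow> 'a \<Rightarrow> nat \<Rightarrow> real) \<Rightarrow>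
      (nat \<Rightarrow> nat \<Rightarrow> real) \<Rightarrow> ('a \<Rightarrow> nat \<Rightarrow> real) \<Rightarrow> bool" where
  "realizable_subseq_limit \<Omega> C S \<Phi> fs c f \<longleftrightarrow> (\<exists>r gs e g. strict_mono r \<and>
     (\<forall>k. \<forall>x\<in>\<Omega>. \<forall>i<last S.
        eval_net relu S (\<Phi> (r k)) (\<lambda>j. fs (r k) x j + c (r k) j) i = gs k x i + e k i) \<and>
     bounded_uniform_limit \<Omega> (last S) gs g \<and>
     (\<forall>\<gamma> \<epsilon>. \<exists>\<Psi>. bounded_NN C S \<Psi> \<and>
        (\<forall>x\<in>\<Omega>. \<forall>i<last S. eval_net relu S \<Psi> (\<lambda>j. f x j + \<gamma> j) i = g x i + \<epsilon> i)))"

lemma realizable_subseq_limit_single: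
  assumes \<Phi>: "\<And>k. bounded_NN C [n, m] (\<Phi> k)" and lim: "bounded_uniform_limit \<Omega> n fs f"
  shows "realizable_subseq_limit \<Omega> C [n, m] \<Phi> fs c f"
proof -
  define W where "W k = fst (hd (\<Phi> k))" for k
  define b where "b k = snd (hd (\<Phi> k))" for k
  have \<Phi>_eq: "\<Phi> k = [(W k, b k)]" for k
    using bounded_NN_hd_tl[OF \<Phi>[of k]] bounded_NN_length[of C "[m]" "tl (\<Phi> k)"]
    by (cases "\<Phi> k") (simp_all add: W_def b_def)
  have W: "\<bar>W k i j\<bar> \<le> C" for k i j
    unfolding W_def by (rule bounded_NN_hd_tl(2)[OF \<Phi>])
  obtain r W' gs e g where r: "strict_mono r"
    and W': "\<And>i j. \<bar>W' i j\<bar> \<le> C" "\<And>i j. m \<le> i \<or> n \<le> j \<Longrightarrow> W' i j = 0"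
    and eq: "\<And>k x i. aff n (W (r k), b (r k)) (\<lambda>j. fs (r k) x j + c (r k) j) i = gs k x i + e k i"
    and lim': "bounded_uniform_limit \<Omega> m gs g"
    and realize: "\<And>\<gamma> \<epsilon>. \<exists>b'. (\<forall>i. m \<le> i \<longrightarrow> b' i = 0) \<and>
        (\<forall>x\<in>\<Omega>. \<forall>i<m. aff n (W', b') (\<lambda>j. f x j + \<gamma> j) i = g x i + \<epsilon> i)"
    using output_layer_subseq_limit[where W = W and b = b and c = c and m = m, OF W lim] by blast
  have "\<exists>\<Psi>. bounded_NN C [n, m] \<Psi> \<and>
      (\<forall>x\<in>\<Omega>. \<forall>i<m. eval_net relu [n, m] \<Psi> (\<lambda>j. f x j + \<gamma> j) i = g x i + \<epsilon> i)" for \<gamma> \<epsilon>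
  proof -
    obtain b' where "\<forall>i. m \<le> i \<longrightarrow> b' i = 0"
      "\<forall>x\<in>\<Omega>. \<forall>i<m. aff n (W', b') (\<lambda>j. f x j + \<gamma> j) i = g x i + \<epsilon> i"
      using realize by blast
    then show ?thesis
      using W' by (intro exI[of _ "[(W', b')]"]) (simp add: bounded_NN_Cons_Cons bounded_NN_Nil)
  qed
  then show ?thesis
    unfolding realizable_subseq_limit_def using r eq lim'
    by (intro exI[of _ r] exI[of _ gs] exI[of _ e] exI[of _ g]) (simp add: \<Phi>_eq)
qed

lemma realizable_subseq_limit_Cons:
  assumes "ms \<noteq> []" and \<Phi>: "\<And>k. bounded_NN C (n # m # ms) (\<Phi> k)"
    and lim: "bounded_uniform_limit \<Omega> n fs f"
    and tail: "\<And>\<Phi>' fs' c' f'. (\<And>k. bounded_NN C (m # ms) (\<Phi>' k)) \<Longrightarrow>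
      bounded_uniform_limit \<Omega> m fs' f' \<Longrightarrow>
      realizable_subseq_limit \<Omega> C (m # ms) \<Phi>' fs' c' f'"
  shows "realizable_subseq_limit \<Omega> C (n # m # ms) \<Phi> fs c f"
proof -
  define W where "W k = fst (hd (\<Phi> k))" for k
  define b where "b k = snd (hd (\<Phi> k))" for k
  define \<Phi>' where "\<Phi>' k = tl (\<Phi> k)" for k
  have \<Phi>_eq: "\<Phi> k = (W k, b k) # \<Phi>' k" and \<Phi>': "bounded_NN C (m # ms) (\<Phi>' k)" for k
    using bounded_NN_hd_tl[OF \<Phi>[of k]] by (simp_all add: W_def b_def \<Phi>'_def)
  have ne: "\<Psi> \<noteq> []" if "bounded_NN C (m # ms) \<Psi>" for \<Psi>
    using bounded_NN_length[OF that] \<open>ms \<noteq> []\<close> by auto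
  have W: "\<bar>W k i j\<bar> \<le> C" for k i j
    unfolding W_def by (rule bounded_NN_hd_tl(2)[OF \<Phi>])
  obtain r W' gs c' g where r: "strict_mono r"
    and W': "\<And>i j. \<bar>W' i j\<bar> \<le> C" "\<And>i j. m \<le> i \<or> n \<le> j \<Longrightarrow> W' i j = 0"
    and eq: "\<And>k x i.
      relu (aff n (W (r k), b (r k)) (\<lambda>j. fs (r k) x j + c (r k) j) i) = gs k x i + c' k i"
    and lim': "bounded_uniform_limit \<Omega> m gs g"
    and realize: "\<And>\<gamma>. \<exists>b' \<gamma>'. (\<forall>i. m \<le> i \<longrightarrow> b' i = 0) \<and>
        (\<forall>x\<in>\<Omega>. \<forall>i<m. relu (aff n (W', b') (\<lambda>j. f x j + \<gamma> j) i) = g x i + \<gamma>' i)"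
    using hidden_layer_subseq_limit[where W = W and b = b and c = c and m = m, OF W lim] by blast
  obtain r' hs e h where r': "strict_mono r'"
    and eq': "\<forall>k. \<forall>x\<in>\<Omega>. \<forall>i<last ms.
      eval_net relu (m # ms) (\<Phi>' (r (r' k))) (\<lambda>j. gs (r' k) x j + c' (r' k) j) i = hs k x i + e k i"
    and lim'': "bounded_uniform_limit \<Omega> (last ms) hs h"
    and realize': "\<forall>\<gamma> \<epsilon>. \<exists>\<Psi>. bounded_NN C (m # ms) \<Psi> \<and>
        (\<forall>x\<in>\<Omega>. \<forall>i<last ms. eval_net relu (m # ms) \<Psi> (\<lambda>j. g x j + \<gamma> j) i = h x i + \<epsilon> i)"
    using tail[where \<Phi>' = "\<lambda>k. \<Phi>' (r k)" and c' = c', OF \<Phi>' lim'] \<open>ms \<noteq> []\<close>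
    unfolding realizable_subseq_limit_def by auto
  have "eval_net relu (n # m # ms) (\<Phi> (r (r' k))) (\<lambda>j. fs (r (r' k)) x j + c (r (r' k)) j) =
      eval_net relu (m # ms) (\<Phi>' (r (r' k))) (\<lambda>j. gs (r' k) x j + c' (r' k) j)" for k x
    unfolding \<Phi>_eq using ne[OF \<Phi>'] eq by (intro eval_net_Cons_Cons_cong) auto
  moreover have "\<exists>\<Psi>. bounded_NN C (n # m # ms) \<Psi> \<and>
      (\<forall>x\<in>\<Omega>. \<forall>i<last ms. eval_net relu (n # m # ms) \<Psi> (\<lambda>j. f x j + \<gamma> j) i = h x i + \<epsilon> i)"
    for \<gamma> \<epsilon>
  proof -
    obtain b' \<gamma>' where b': "\<forall>i. m \<le> i \<longrightarrow> b' i = 0"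
      and \<gamma>': "\<forall>x\<in>\<Omega>. \<forall>i<m. relu (aff n (W', b') (\<lambda>j. f x j + \<gamma> j) i) = g x i + \<gamma>' i"
      using realize by blast
    obtain \<Psi> where \<Psi>: "bounded_NN C (m # ms) \<Psi>"
      and \<Psi>_eq: "\<forall>x\<in>\<Omega>. \<forall>i<last ms. eval_net relu (m # ms) \<Psi> (\<lambda>j. g x j + \<gamma>' j) i = h x i + \<epsilon> i"
      using realize' by blast
    have "eval_net relu (n # m # ms) ((W', b') # \<Psi>) (\<lambda>j. f x j + \<gamma> j) =
        eval_net relu (m # ms) \<Psi> (\<lambda>j. g x j + \<gamma>' j)" if "x \<in> \<Omega>" for x
      using ne[OF \<Psi>] \<gamma>' that by (intro eval_net_Cons_Cons_cong) auto
    then show ?thesis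
      using W' b' \<Psi> \<Psi>_eq by (intro exI[of _ "(W', b') # \<Psi>"]) (simp add: bounded_NN_Cons_Cons)
  qed
  ultimately show ?thesis
    unfolding realizable_subseq_limit_def using strict_mono_o[OF r r'] eq' lim'' \<open>ms \<noteq> []\<close>
    by (intro exI[of _ "r \<circ> r'"] exI[of _ hs] exI[of _ e] exI[of _ h]) (simp add: o_def)
qed

lemma realizable_subseq_limit:
  assumes "ns \<noteq> []" "\<And>k. bounded_NN C (n # ns) (\<Phi> k)" "bounded_uniform_limit \<Omega> n fs f"
  shows "realizable_subseq_limit \<Omega> C (n # ns) \<Phi> fs c f"
  using assms
proof (induction ns arbitrary: n \<Phi> fs c f rule: list_nonempty_induct)
  case (single m)
  then show ?case by (rule realizable_subseq_limit_single)
next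
  case (cons m ms)
  then show ?case by (intro realizable_subseq_limit_Cons) auto
qed

section \<open>Realizations\<close>

lemma bij_betw_enc: "bij_betw (enc :: 'n::finite \<Rightarrow> nat) UNIV {..<CARD('n)}"
proof -
  have "\<exists>e. bij_betw e (UNIV :: 'n set) {..<CARD('n)}"
    by (rule finite_same_card_bij) auto
  then show ?thesis
    unfolding enc_def by (rule someI_ex)
qed

lemma enc_less: "enc (i :: 'n::finite) < CARD('n)"
  using bij_betwE[OF bij_betw_enc] by blast

lemma dec_enc: "dec (enc i) = i"
  unfolding dec_def using bij_betw_imp_inj_on[OF bij_betw_enc] by (rule inv_f_f)

definition coords :: "real^'d::finite \<Rightarrow> nat \<Rightarrow> real" where
  "coords x j = (if j < CARD('d) then x $ dec j else 0)"

lemma realization_nth: "realization \<rho> S \<Phi> x $ i = eval_net \<rho> S \<Phi> (coords x) (enc i)"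
  by (simp add: realization_def coords_def[abs_def])

lemma bounded_uniform_limit_coords:
  assumes "bounded \<Omega>"
  shows "bounded_uniform_limit \<Omega> CARD('d) (\<lambda>k. coords) (coords :: real^'d::finite \<Rightarrow> nat \<Rightarrow> real)"
proof -
  obtain B where B: "\<And>x. x \<in> \<Omega> \<Longrightarrow> norm x \<le> B"
    using assms by (auto simp: bounded_iff)
  have "\<bar>coords x j\<bar> \<le> B" if "x \<in> \<Omega>" for x j
    using component_le_norm_cart[of x "dec j"] B[OF that] norm_ge_zero[of x]
    by (auto simp: coords_def)
  then show ?thesis
    unfolding bounded_uniform_limit_def by (auto simp: uniform_limit_const bounded_iff)
qed

lemma continuous_on_aff:
  "(\<And>j. continuous_on A (\<lambda>x. u x j)) \<Longrightarrow> continuous_on A (\<lambda>x. aff n l (u x) i)"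
  unfolding aff_def by (intro continuous_intros) auto

lemma continuous_on_eval_net:
  assumes \<rho>: "continuous_on UNIV \<rho>" and u: "\<And>j. continuous_on A (\<lambda>x. u x j)"
  shows "continuous_on A (\<lambda>x. eval_net \<rho> S \<Phi> (u x) i)"
  using u
proof (induction \<Phi> arbitrary: S u i rule: induct_list012)
  case 1
  then show ?case by (cases S) simp_all
next
  case (2 l)
  then show ?case by (cases S) (simp_all add: continuous_on_aff)
next
  case (3 l l' \<Phi>)
  show ?case
  proof (cases S)
    case (Cons n ns)
    have "continuous_on A (\<lambda>x. \<rho> (aff n l (u x) j))" for j
      using continuous_on_compose2[OF \<rho> continuous_on_aff[OF "3.prems"]] by simp
    from "3.IH"(2)[OF this] show ?thesis
      using Cons by simp
  qed (simp add: "3.prems")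
qed

lemma continuous_on_realization:
  assumes "continuous_on UNIV \<rho>"
  shows "continuous_on UNIV (realization \<rho> S \<Phi> :: real^'d::finite \<Rightarrow> real^'m::finite)"
proof -
  have "continuous_on UNIV (\<lambda>x :: real^'d. coords x j)" for j
    by (cases "j < CARD('d)") (auto simp: coords_def intro: continuous_intros)
  then have "continuous_on UNIV (\<lambda>x :: real^'d. \<chi> i. eval_net \<rho> S \<Phi> (coords x) (enc i) :: real^'m)"
    by (intro continuous_on_vec_lambda continuous_on_eval_net[OF assms])
  moreover have
    "realization \<rho> S \<Phi> = (\<lambda>x :: real^'d. \<chi> i. eval_net \<rho> S \<Phi> (coords x) (enc i) :: real^'m)"
    by (simp add: fun_eq_iff vec_eq_iff realization_nth)
  ultimately show ?thesis
    by simp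
qed

lemma continuous_relu: "continuous_on UNIV relu"
  by (rule uniformly_continuous_imp_continuous[OF uniformly_continuous_relu])

lemma scaling_norm_le_iff:
  assumes NN: "is_NN S \<Phi>" and pos: "\<forall>n\<in>set S. 0 < n" and "\<Phi> \<noteq> []"
  shows "scaling_norm S \<Phi> \<le> C \<longleftrightarrow> (\<forall>l\<in>set \<Phi>. \<forall>i j. \<bar>fst l i j\<bar> \<le> C)"
proof -
  define A where "A = (\<Union>l<length \<Phi>. {\<bar>fst (\<Phi> ! l) i j\<bar> | i j. i < S ! (l + 1) \<and> j < S ! l})"
  have len: "length S = length \<Phi> + 1"
    using NN by (simp add: is_NN_def)
  have "finite A"
    unfolding A_def by (auto intro: finite_image_set2)
  have "0 < S ! 0" "0 < S ! 1"
    using pos len \<open>\<Phi> \<noteq> []\<close> by (auto simp: in_set_conv_nth)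
  then have A0: "\<bar>fst (\<Phi> ! 0) 0 0\<bar> \<in> A"
    unfolding A_def using \<open>\<Phi> \<noteq> []\<close> by force
  have "(\<forall>a\<in>A. a \<le> C) \<longleftrightarrow> (\<forall>l\<in>set \<Phi>. \<forall>i j. \<bar>fst l i j\<bar> \<le> C)"
  proof
    assume le: "\<forall>a\<in>A. a \<le> C"
    show "\<forall>l\<in>set \<Phi>. \<forall>i j. \<bar>fst l i j\<bar> \<le> C"
    proof (intro ballI allI)
      fix l i j assume "l \<in> set \<Phi>"
      then obtain t where t: "t < length \<Phi>" "l = \<Phi> ! t"
        by (auto simp: in_set_conv_nth)
      show "\<bar>fst l i j\<bar> \<le> C"
      proof (cases "i < S ! (t + 1) \<and> j < S ! t")
        case True
        then show ?thesis using le t unfolding A_def by blast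
      next
        case False
        then have "fst l i j = 0"
          using NN t unfolding is_NN_def by auto
        then show ?thesis using le A0 by force
      qed
    qed
  qed (auto simp: A_def)
  moreover have "Max A \<le> C \<longleftrightarrow> (\<forall>a\<in>A. a \<le> C)"
    using \<open>finite A\<close> A0 by (subst Max_le_iff) auto
  moreover have "scaling_norm S \<Phi> = Max A"
    by (simp add: scaling_norm_def A_def)
  ultimately show ?thesis
    by simp
qed

lemma RNN_eq_bounded_NN:
  assumes "\<forall>n\<in>set hs. 0 < n"
  shows "(RNN \<rho> hs C :: (real^'d::finite \<Rightarrow> real^'m::finite) set) =
    {realization \<rho> (CARD('d) # hs @ [CARD('m)]) \<Phi> | \<Phi>. bounded_NN C (CARD('d) # hs @ [CARD('m)]) \<Phi>}"
proof -
  have "scaling_norm (CARD('d) # hs @ [CARD('m)]) \<Phi> \<le> C \<longleftrightarrow> (\<forall>l\<in>set \<Phi>. \<forall>i j. \<bar>fst l i j\<bar> \<le> C)"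
    if "is_NN (CARD('d) # hs @ [CARD('m)]) \<Phi>" for \<Phi>
    using that assms by (intro scaling_norm_le_iff) (auto simp: is_NN_def)
  then show ?thesis
    unfolding RNN_def bounded_NN_def by blast
qed

lemma RNN_subseq_decomposition:
  fixes g :: "nat \<Rightarrow> real^'d::finite \<Rightarrow> real^'m::finite"
  assumes hs: "\<forall>n\<in>set hs. 0 < n" and "bounded \<Omega>" and g: "\<And>k. g k \<in> RNN relu hs C"
  obtains r \<psi>s e \<psi> where "strict_mono r" "\<And>k x. x \<in> \<Omega> \<Longrightarrow> g (r k) x = \<psi>s k x + e k"
    "\<And>x. x \<in> \<Omega> \<Longrightarrow> (\<lambda>k. \<psi>s k x) \<longlonglongrightarrow> \<psi> x" "\<And>v. \<exists>h\<in>RNN relu hs C. \<forall>x\<in>\<Omega>. h x = \<psi> x + v"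
proof -
  define S where "S = CARD('d) # hs @ [CARD('m)]"
  have "\<forall>k. \<exists>\<Phi>. g k = realization relu S \<Phi> \<and> bounded_NN C S \<Phi>"
    using g unfolding RNN_eq_bounded_NN[OF hs] S_def by blast
  then obtain \<Phi> where \<Phi>: "\<And>k. g k = realization relu S (\<Phi> k)" "\<And>k. bounded_NN C S (\<Phi> k)"
    by metis
  have "realizable_subseq_limit \<Omega> C S \<Phi> (\<lambda>k. coords) (\<lambda>k j. 0) coords"
    using \<Phi>(2) bounded_uniform_limit_coords[OF \<open>bounded \<Omega>\<close>]
    unfolding S_def by (intro realizable_subseq_limit) auto
  then obtain r gs e g' where r: "strict_mono r"
    and eq: "\<forall>k. \<forall>x\<in>\<Omega>. \<forall>i<CARD('m). eval_net relu S (\<Phi> (r k)) (coords x) i = gs k x i + e k i"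
    and lim: "bounded_uniform_limit \<Omega> CARD('m) gs g'"
    and realize: "\<forall>\<gamma> \<epsilon>. \<exists>\<Psi>. bounded_NN C S \<Psi> \<and>
        (\<forall>x\<in>\<Omega>. \<forall>i<CARD('m). eval_net relu S \<Psi> (\<lambda>j. coords x j + \<gamma> j) i = g' x i + \<epsilon> i)"
    unfolding realizable_subseq_limit_def by (auto simp: S_def)
  define \<psi>s where "\<psi>s k x = (\<chi> i. gs k x (enc i) :: real^'m)" for k x
  define e' where "e' k = (\<chi> i. e k (enc i) :: real^'m)" for k
  define \<psi> where "\<psi> x = (\<chi> i. g' x (enc i) :: real^'m)" for x
  have "g (r k) x = \<psi>s k x + e' k" if "x \<in> \<Omega>" for k x
    using eq that enc_less[where 'n = 'm]
    by (simp add: vec_eq_iff \<Phi>(1) realization_nth \<psi>s_def e'_def)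
  moreover have "(\<lambda>k. \<psi>s k x) \<longlonglongrightarrow> \<psi> x" if "x \<in> \<Omega>" for x
  proof (rule vec_tendstoI)
    fix i :: 'm
    have "uniform_limit \<Omega> (\<lambda>k x. gs k x (enc i)) (\<lambda>x. g' x (enc i)) sequentially"
      using lim enc_less[of i] by (simp add: bounded_uniform_limit_def)
    from tendsto_uniform_limitI[OF this that] show "(\<lambda>k. \<psi>s k x $ i) \<longlonglongrightarrow> \<psi> x $ i"
      by (simp add: \<psi>s_def \<psi>_def)
  qed
  moreover have "\<exists>h\<in>RNN relu hs C. \<forall>x\<in>\<Omega>. h x = \<psi> x + v" for v
  proof -
    obtain \<Psi> where \<Psi>: "bounded_NN C S \<Psi>"
      and \<Psi>_eq: "\<forall>x\<in>\<Omega>. \<forall>i<CARD('m). eval_net relu S \<Psi> (coords x) i = g' x i + v $ dec i"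
      using realize[rule_format, of "\<lambda>j. 0" "\<lambda>i. v $ dec i"] by auto
    have "(realization relu S \<Psi> :: real^'d \<Rightarrow> real^'m) \<in> RNN relu hs C"
      using \<Psi> unfolding RNN_eq_bounded_NN[OF hs] S_def by blast
    moreover have "\<forall>x\<in>\<Omega>. realization relu S \<Psi> x = \<psi> x + v"
      using \<Psi>_eq enc_less[where 'n = 'm] by (simp add: vec_eq_iff realization_nth \<psi>_def dec_enc)
    ultimately show ?thesis by blast
  qed
  ultimately show ?thesis
    using that r by blast
qed

lemma RNN_subseq_pointwise_limit:
  fixes g :: "nat \<Rightarrow> real^'d::finite \<Rightarrow> real^'m::finite"
  assumes "\<forall>n\<in>set hs. 0 < n" "bounded \<Omega>" "\<And>k. g k \<in> RNN relu hs C"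
  obtains r :: "nat \<Rightarrow> nat" where "strict_mono r"
    "\<And>s x0 y0. strict_mono s \<Longrightarrow> x0 \<in> \<Omega> \<Longrightarrow> (\<lambda>k. g (r (s k)) x0) \<longlonglongrightarrow> y0 \<Longrightarrow>
       \<exists>h\<in>RNN relu hs C. \<forall>x\<in>\<Omega>. (\<lambda>k. g (r (s k)) x) \<longlonglongrightarrow> h x"
proof -
  obtain r \<psi>s e \<psi> where r: "strict_mono r" and eq: "\<And>k x. x \<in> \<Omega> \<Longrightarrow> g (r k) x = \<psi>s k x + e k"
    and lim: "\<And>x. x \<in> \<Omega> \<Longrightarrow> (\<lambda>k. \<psi>s k x) \<longlonglongrightarrow> \<psi> x"
    and realize: "\<And>v. \<exists>h\<in>RNN relu hs C. \<forall>x\<in>\<Omega>. h x = \<psi> x + v"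
    using RNN_subseq_decomposition[where g = g, OF assms] by blast
  have "\<exists>h\<in>RNN relu hs C. \<forall>x\<in>\<Omega>. (\<lambda>k. g (r (s k)) x) \<longlonglongrightarrow> h x"
    if s: "strict_mono s" and x0: "x0 \<in> \<Omega>" and y0: "(\<lambda>k. g (r (s k)) x0) \<longlonglongrightarrow> y0" for s x0 y0
  proof -
    have lim_s: "(\<lambda>k. \<psi>s (s k) x) \<longlonglongrightarrow> \<psi> x" if "x \<in> \<Omega>" for x
      using LIMSEQ_subseq_LIMSEQ[OF lim[OF that] s] by (simp add: o_def)
    have "(\<lambda>k. e (s k)) \<longlonglongrightarrow> y0 - \<psi> x0"
      using tendsto_diff[OF y0 lim_s[OF x0]] by (simp add: eq[OF x0])
    then have g_lim: "(\<lambda>k. g (r (s k)) x) \<longlonglongrightarrow> \<psi> x + (y0 - \<psi> x0)" if "x \<in> \<Omega>" for x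
      using tendsto_add[OF lim_s[OF that]] by (simp add: eq[OF that])
    obtain h where h: "h \<in> RNN relu hs C" and h_eq: "\<forall>x\<in>\<Omega>. h x = \<psi> x + (y0 - \<psi> x0)"
      using realize by blast
    show ?thesis
      using g_lim h_eq by (intro bexI[OF _ h]) simp
  qed
  then show ?thesis
    by (rule that[OF r])
qed

lemma continuous_on_RNN:
  "h \<in> RNN relu hs C \<Longrightarrow> continuous_on UNIV (h :: real^'d::finite \<Rightarrow> real^'m::finite)"
  using continuous_on_realization[OF continuous_relu] by (auto simp: RNN_def)

lemma Lp_mem_RNN:
  fixes \<Omega> :: "(real^'d::finite) set" and h :: "real^'d \<Rightarrow> real^'m::finite"
  assumes "bounded \<Omega>" "finite_measure \<mu>" "sets \<mu> = sets (restrict_space borel \<Omega>)"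
    and "h \<in> RNN relu hs C"
  shows "Lp_mem \<mu> p h"
proof -
  have cont: "continuous_on UNIV h"
    using assms(4) by (rule continuous_on_RNN)
  then have "h \<in> borel_measurable (restrict_space borel \<Omega>)"
    by (intro measurable_restrict_space1 borel_measurable_continuous_onI)
  then have "h \<in> borel_measurable \<mu>"
    by (simp add: measurable_cong_sets[OF assms(3) refl])
  moreover have "bounded (h ` closure \<Omega>)"
    by (intro compact_imp_bounded compact_continuous_image continuous_on_subset[OF cont])
      (auto simp: compact_closure \<open>bounded \<Omega>\<close>)
  then obtain B where "\<And>x. x \<in> \<Omega> \<Longrightarrow> norm (h x) \<le> B"
    using closure_subset by (auto simp: bounded_iff)
  moreover have "space \<mu> = \<Omega>"
    using sets_eq_imp_space_eq[OF assms(3)] by (simp add: space_restrict_space)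
  ultimately show ?thesis
    using Lp_mem_bounded[OF assms(2)] by blast
qed

lemma RNN_closed_in_C:
  fixes \<Omega> :: "(real^'d::finite) set"
  assumes hs: "\<forall>n\<in>set hs. 0 < n" and "bounded \<Omega>"
  shows "closed_in_C \<Omega> (RNN relu hs C :: (real^'d \<Rightarrow> real^'m::finite) set)"
  unfolding closed_in_C_def
proof (intro conjI allI impI)
  show "\<forall>h\<in>RNN relu hs C. continuous_on \<Omega> (h :: real^'d \<Rightarrow> real^'m)"
    using continuous_on_subset[OF continuous_on_RNN] by blast
next
  fix f and g :: "nat \<Rightarrow> real^'d \<Rightarrow> real^'m"
  assume "continuous_on \<Omega> f \<and> (\<forall>k. g k \<in> RNN relu hs C) \<and> uniform_limit \<Omega> g f sequentially"
  then have g: "\<And>k. g k \<in> RNN relu hs C" and ul: "uniform_limit \<Omega> g f sequentially"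
    by auto
  obtain r :: "nat \<Rightarrow> nat" where r: "strict_mono r"
    and R: "\<And>s x0 y0. strict_mono s \<Longrightarrow> x0 \<in> \<Omega> \<Longrightarrow> (\<lambda>k. g (r (s k)) x0) \<longlonglongrightarrow> y0 \<Longrightarrow>
       \<exists>h\<in>RNN relu hs C. \<forall>x\<in>\<Omega>. (\<lambda>k. g (r (s k)) x) \<longlonglongrightarrow> h x"
    using RNN_subseq_pointwise_limit[where g = g, OF hs \<open>bounded \<Omega>\<close> g] by blast
  have g_lim: "(\<lambda>k. g (r k) x) \<longlonglongrightarrow> f x" if "x \<in> \<Omega>" for x
    using LIMSEQ_subseq_LIMSEQ[OF tendsto_uniform_limitI[OF ul that] r] by (simp add: o_def)
  show "\<exists>h\<in>RNN relu hs C. \<forall>x\<in>\<Omega>. f x = h x"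
  proof (cases "\<Omega> = {}")
    case True
    then show ?thesis using g by blast
  next
    case False
    then obtain x0 where "x0 \<in> \<Omega>" by blast
    then obtain h where h: "h \<in> RNN relu hs C" and h_lim: "\<forall>x\<in>\<Omega>. (\<lambda>k. g (r k) x) \<longlonglongrightarrow> h x"
      using R[OF strict_mono_id[unfolded id_def] _ g_lim] by blast
    show ?thesis
      using g_lim h_lim LIMSEQ_unique by (intro bexI[OF _ h]) blast
  qed
qed

lemma RNN_closed_in_Lp:
  fixes \<Omega> :: "(real^'d::finite) set" and \<mu> :: "(real^'d) measure"
  assumes hs: "\<forall>n\<in>set hs. 0 < n" and "bounded \<Omega>"
    and \<mu>: "finite_measure \<mu>" "sets \<mu> = sets (restrict_space borel \<Omega>)" and p: "0 < p"
  shows "closed_in_Lp \<mu> p (RNN relu hs C :: (real^'d \<Rightarrow> real^'m::finite) set)"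
proof -
  have space: "space \<mu> = \<Omega>"
    using sets_eq_imp_space_eq[OF \<mu>(2)] by (simp add: space_restrict_space)
  have "\<exists>h\<in>RNN relu hs C. AE x in \<mu>. f x = h x"
    if f: "Lp_mem \<mu> p f" and g: "\<And>k. g k \<in> RNN relu hs C"
      and lim: "(\<lambda>k. Lp_norm \<mu> p (\<lambda>x. g k x - f x)) \<longlonglongrightarrow> 0"
    for f and g :: "nat \<Rightarrow> real^'d \<Rightarrow> real^'m"
  proof (cases "emeasure \<mu> (space \<mu>) = 0")
    case True
    then have "space \<mu> \<in> null_sets \<mu>"
      by (auto intro: null_setsI)
    then have "AE x in \<mu>. f x = g 0 x"
      by (rule AE_I') auto
    then show ?thesis using g by blast
  next
    case False
    obtain r :: "nat \<Rightarrow> nat" where r: "strict_mono r"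
      and R: "\<And>s x0 y0. strict_mono s \<Longrightarrow> x0 \<in> \<Omega> \<Longrightarrow> (\<lambda>k. g (r (s k)) x0) \<longlonglongrightarrow> y0 \<Longrightarrow>
         \<exists>h\<in>RNN relu hs C. \<forall>x\<in>\<Omega>. (\<lambda>k. g (r (s k)) x) \<longlonglongrightarrow> h x"
      using RNN_subseq_pointwise_limit[where g = g, OF hs \<open>bounded \<Omega>\<close> g] by blast
    have "(\<lambda>k. Lp_norm \<mu> p (\<lambda>x. g (r k) x - f x)) \<longlonglongrightarrow> 0"
      using LIMSEQ_subseq_LIMSEQ[OF lim r] by (simp add: o_def)
    then obtain s where s: "strict_mono s" and AE: "AE x in \<mu>. (\<lambda>k. g (r (s k)) x) \<longlonglongrightarrow> f x"
      using Lp_norm_tendsto_zero_AE_subseq[where g = "\<lambda>k. g (r k)",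
          OF p f Lp_mem_RNN[OF \<open>bounded \<Omega>\<close> \<mu> g]]
      by blast
    obtain x0 where "x0 \<in> \<Omega>" "(\<lambda>k. g (r (s k)) x0) \<longlonglongrightarrow> f x0"
      using AE_imp_bex_space[OF False AE] space by blast
    then obtain h where h: "h \<in> RNN relu hs C" and h_lim: "\<forall>x\<in>\<Omega>. (\<lambda>k. g (r (s k)) x) \<longlonglongrightarrow> h x"
      using R[OF s] by blast
    have "AE x in \<mu>. f x = h x"
      using AE AE_space by eventually_elim (use h_lim space LIMSEQ_unique in blast)
    then show ?thesis using h by blast
  qed
  then show ?thesis
    unfolding closed_in_Lp_def using Lp_mem_RNN[OF \<open>bounded \<Omega>\<close> \<mu>] by blast
qed

theorem proposition3p7:
  fixes hs :: "nat list" and C :: real and \<Omega> :: "(real^'d::finite) set"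
  assumes "\<forall>n\<in>set hs. 0 < n"
    and "C > 0"
    and "\<Omega> \<in> sets borel"
    and "bounded \<Omega>"
  shows "(\<forall>(\<mu>::(real^'d) measure) (p::ennreal).
            finite_measure \<mu> \<and> sets \<mu> = sets (restrict_space borel \<Omega>) \<and> 1 \<le> p
            \<longrightarrow> closed_in_Lp \<mu> p (RNN relu hs C :: (real^'d \<Rightarrow> real^'m::finite) set))
       \<and> (compact \<Omega> \<longrightarrow> closed_in_C \<Omega> (RNN relu hs C :: (real^'d \<Rightarrow> real^'m) set))"
proof -
  have "closed_in_Lp \<mu> p (RNN relu hs C :: (real^'d \<Rightarrow> real^'m) set)"
    if "finite_measure \<mu>" "sets \<mu> = sets (restrict_space borel \<Omega>)" "1 \<le> p" for \<mu> p
    using RNN_closed_in_Lp[OF assms(1,4) that(1,2) less_le_trans[OF zero_less_one that(3)]] .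
  moreover have "closed_in_C \<Omega> (RNN relu hs C :: (real^'d \<Rightarrow> real^'m) set)"
    by (rule RNN_closed_in_C[OF assms(1,4)])
  ultimately show ?thesis
    by blast
qed

end
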